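(* Let $X$ be a finite quandle, $\Lambda$ a finite abelian group, $\phi:X\times X\to\Lambda$ a quandle $2$-cocycle with $Q=\Lambda\times_\phi X$ connected, and $\pi:Q\to X$, $(\lambda,a)\mapsto a$. Let $K$ be an oriented knot, $T$ a $1$-tangle diagram with closure $K$, top arc $b_0$, bottom arc $b_1$, and write $\Phi_\phi(K)=\sum_{\lambda\in\Lambda}n_\lambda\lambda$. Fix $x\in X$, let $e=(1,x)$, let $\mathscr{C}_0$ be the set of colorings $C$ of $T$ by $Q$ with $C(b_0)=e$ and $\pi C(b_1)=x$, and let $\mathscr{C}_1=\mathrm{Col}^e_Q(T)\setminus\mathscr{C}_0$. Then $$\Psi^e_Q(K)=\frac{1}{|X|}\sum_{\lambda\in\Lambda} n_\lambda\,(\lambda,x)+\sum_{C\in\mathscr{C}_1}C(b_1).$$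
   Context: A quandle is a set with operation $*$ satisfying $a*a=a$; unique right division; $(a*b)*c=(a*c)*(b*c)$. $R_a(y)=y*a$; connected means the group generated by the $R_a$ acts transitively. A quandle $2$-cocycle is $\phi:X\times X\to\Lambda$ ($\Lambda$ abelian, multiplicative) with $\phi(a,a)=1$ and $\phi(a,b)\phi(a*b,c)=\phi(a,c)\phi(a*c,b*c)$; $\Lambda\times_\phi X$ is $\Lambda\times X$ with $(\lambda,a)*(\mu,b)=(\lambda\phi(a,b),a*b)$. Colorings: arcs of an oriented diagram get colors so that at each crossing $\tau$ with source colors $(x_\tau,y_\tau)$ (incoming under-arc, over-arc) the outgoing under-arc gets $x_\tau*y_\tau$; $\epsilon(\tau)$ is the crossing sign; $B_\phi(K,C)=\prod_\tau\phi(x_\tau,y_\tau)^{\epsilon(\tau)}$ and $\Phi_\phi(K)=\sum_C B_\phi(K,C)\in\mathbb{Z}[\Lambda]$ over all colorings of $K$ by $X$. A $1$-tangle is a properly embedded oriented arc in a 3-ball up to isotopy rel boundary, oriented top to bottom, with closure obtained by joining endpoints with a trivial arc; end colors need not agree. $\mathrm{Col}^e_Q(T)$ is the set of colorings $C$ of $T$ by $Q$ with $C(b_0)=e$, and $\Psi^e_Q(K)=\sum_{C\in\mathrm{Col}^e_Q(T)}C(b_1)$, a formal $\mathbb{Z}$-linear combination of elements of $Q$. *)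

theory Defs
  imports Complex_Main "HOL-Library.FuncSet"
begin

text \<open>Quandles on a whole type (the carrier is UNIV).  The operation is x * y = op x y.\<close>
definition quandle :: "('a \<Rightarrow> 'a \<Rightarrow> 'a) \<Rightarrow> bool" where
  "quandle op \<longleftrightarrow> (\<forall>a. op a a = a) \<and> (\<forall>a b. \<exists>!c. op c a = b)
     \<and> (\<forall>a b c. op (op a b) c = op (op a c) (op b c))"

definition inner_step :: "('a \<Rightarrow> 'a \<Rightarrow> 'a) \<Rightarrow> ('a \<times> 'a) set" where
  "inner_step op = {(y, op y a) | y a. True} \<union> {(op y a, y) | y a. True}"

text \<open>Connected: the group generated by the R_a acts transitively, i.e. any two
  elements are related by a word in the R_a and their inverses.\<close>
definition quandle_connected :: "('a \<Rightarrow> 'a \<Rightarrow> 'a) \<Rightarrow> bool" where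
  "quandle_connected op \<longleftrightarrow> (\<forall>p q. (p, q) \<in> (inner_step op)\<^sup>*)"

definition quandle_2cocycle :: "('a \<Rightarrow> 'a \<Rightarrow> 'a) \<Rightarrow> ('a \<Rightarrow> 'a \<Rightarrow> 'l::ab_group_add) \<Rightarrow> bool" where
  "quandle_2cocycle op phi \<longleftrightarrow> (\<forall>a. phi a a = 0)
     \<and> (\<forall>a b c. phi a b + phi (op a b) c = phi a c + phi (op a c) (op b c))"

definition ext_op :: "('a \<Rightarrow> 'a \<Rightarrow> 'a) \<Rightarrow> ('a \<Rightarrow> 'a \<Rightarrow> 'l::ab_group_add)
    \<Rightarrow> ('l \<times> 'a) \<Rightarrow> ('l \<times> 'a) \<Rightarrow> ('l \<times> 'a)" where
  "ext_op op phi p q = (fst p + phi (snd p) (snd q), op (snd p) (snd q))"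

text \<open>Combinatorial oriented 1-tangle diagram with m crossings.  Travelling along the
  strand from top to bottom, the arcs are 0,1,...,m (arc 0 = top arc b0, arc m = bottom
  arc b1); the i-th crossing (1 \<le> i \<le> m) is where the strand passes under, the incoming
  under-arc is i-1, the outgoing under-arc is i, the over-arc is ov i, and sg i is
  True iff the crossing is positive.\<close>
definition tangle_diagram :: "nat \<Rightarrow> (nat \<Rightarrow> nat) \<Rightarrow> bool" where
  "tangle_diagram m ov \<longleftrightarrow> (\<forall>i\<in>{1..m}. ov i \<le> m)"

text \<open>Source under-arc colour at crossing i: at a positive crossing the incoming
  under-arc, at a negative crossing the outgoing under-arc.\<close>
definition src_col :: "(nat \<Rightarrow> bool) \<Rightarrow> (nat \<Rightarrow> 'q) \<Rightarrow> nat \<Rightarrow> 'q" where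
  "src_col sg C i = (if sg i then C (i - 1) else C i)"

definition colorings :: "('q \<Rightarrow> 'q \<Rightarrow> 'q) \<Rightarrow> nat \<Rightarrow> (nat \<Rightarrow> nat) \<Rightarrow> (nat \<Rightarrow> bool)
    \<Rightarrow> (nat \<Rightarrow> 'q) set" where
  "colorings op m ov sg = {C \<in> {0..m} \<rightarrow>\<^sub>E UNIV.
      \<forall>i\<in>{1..m}. (if sg i then C i = op (C (i - 1)) (C (ov i))
                           else C (i - 1) = op (C i) (C (ov i)))}"

text \<open>Colorings of the closure: b0 and b1 are joined into a single arc.\<close>
definition closure_colorings :: "('q \<Rightarrow> 'q \<Rightarrow> 'q) \<Rightarrow> nat \<Rightarrow> (nat \<Rightarrow> nat) \<Rightarrow> (nat \<Rightarrow> bool)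
    \<Rightarrow> (nat \<Rightarrow> 'q) set" where
  "closure_colorings op m ov sg = {C \<in> colorings op m ov sg. C 0 = C m}"

definition boltzmann :: "('a \<Rightarrow> 'a \<Rightarrow> 'l::ab_group_add) \<Rightarrow> nat \<Rightarrow> (nat \<Rightarrow> nat)
    \<Rightarrow> (nat \<Rightarrow> bool) \<Rightarrow> (nat \<Rightarrow> 'a) \<Rightarrow> 'l" where
  "boltzmann phi m ov sg C = (\<Sum>i\<in>{1..m}.
      (if sg i then phi (src_col sg C i) (C (ov i)) else - phi (src_col sg C i) (C (ov i))))"

text \<open>Formal Z-linear combination sum_{c in S} f c, as a coefficient function.\<close>
definition formal_sum :: "'c set \<Rightarrow> ('c \<Rightarrow> 'q) \<Rightarrow> 'q \<Rightarrow> int" where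
  "formal_sum S f q = int (card {c \<in> S. f c = q})"

text \<open>Cocycle invariant Phi_phi(K) = sum_C B_phi(K,C) in Z[Lambda], computed on the closure
  diagram of the tangle; coefficient n_lambda.\<close>
definition cocycle_invariant :: "('a \<Rightarrow> 'a \<Rightarrow> 'a) \<Rightarrow> ('a \<Rightarrow> 'a \<Rightarrow> 'l::ab_group_add) \<Rightarrow> nat
    \<Rightarrow> (nat \<Rightarrow> nat) \<Rightarrow> (nat \<Rightarrow> bool) \<Rightarrow> 'l \<Rightarrow> int" where
  "cocycle_invariant op phi m ov sg =
     formal_sum (closure_colorings op m ov sg) (boltzmann phi m ov sg)"

definition col_e :: "('q \<Rightarrow> 'q \<Rightarrow> 'q) \<Rightarrow> nat \<Rightarrow> (nat \<Rightarrow> nat) \<Rightarrow> (nat \<Rightarrow> bool) \<Rightarrow> 'q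
    \<Rightarrow> (nat \<Rightarrow> 'q) set" where
  "col_e op m ov sg e = {C \<in> colorings op m ov sg. C 0 = e}"

definition Psi :: "('q \<Rightarrow> 'q \<Rightarrow> 'q) \<Rightarrow> nat \<Rightarrow> (nat \<Rightarrow> nat) \<Rightarrow> (nat \<Rightarrow> bool) \<Rightarrow> 'q
    \<Rightarrow> 'q \<Rightarrow> int" where
  "Psi op m ov sg e = formal_sum (col_e op m ov sg e) (\<lambda>C. C m)"

end

theory Submission
  imports Defs
begin

(* A coloring of the tangle by Q with top colour (0, x) is determined by its projection D to X:
   its \<Lambda>-coordinate accumulates the cocycle values crossing by crossing, so its bottom colour
   is (B_\<phi>(D), D(b1)).  Hence the coefficient of (\<lambda>, x) in \<Psi> is the number of colorings of
   the closure K by X with base colour x and weight \<lambda>.  Right translation by c maps such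
   colorings based at y injectively to those based at y * c; by the cocycle condition it changes
   the weight by a telescoping sum, which vanishes on the closed strand.  As R_c permutes the
   finite X, the counts at y and y * c agree, and since X is connected (a quotient of Q), the
   count does not depend on the base colour: it is n_\<lambda> / |X|. *)

lemma quandle_right_distrib: "quandle op \<Longrightarrow> op (op a b) c = op (op a c) (op b c)"
  unfolding quandle_def by blast

lemma bij_quandle_right: "quandle op \<Longrightarrow> bij (\<lambda>y. op y c)"
  unfolding quandle_def bij_iff by metis

lemma quandle_connected_ext:
  assumes "quandle_connected (ext_op op phi)"
  shows "quandle_connected op"
  unfolding quandle_connected_def
proof (intro allI)
  fix p q
  have step: "(snd u, snd v) \<in> inner_step op" if "(u, v) \<in> inner_step (ext_op op phi)" for u v
    using that unfolding inner_step_def ext_op_def by auto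
  have "(snd u, snd v) \<in> (inner_step op)\<^sup>*" if "(u, v) \<in> (inner_step (ext_op op phi))\<^sup>*" for u v
    using that by (induction rule: rtrancl_induct) (auto dest: step intro: rtrancl_into_rtrancl)
  moreover have "((undefined, p), (undefined, q)) \<in> (inner_step (ext_op op phi))\<^sup>*"
    using assms unfolding quandle_connected_def by blast
  ultimately show "(p, q) \<in> (inner_step op)\<^sup>*" by fastforce
qed

lemma quandle_connected_right_invariant_eq:
  assumes "quandle_connected op" and "\<And>y c. g (op y c) = g y"
  shows "g p = g q"
proof -
  have "(p, q) \<in> (inner_step op)\<^sup>*" using assms(1) unfolding quandle_connected_def by blast
  then show ?thesis
    by (induction rule: rtrancl_induct) (auto simp: inner_step_def assms(2))
qed

lemma colorings_crossing:
  assumes "C \<in> colorings op m ov sg" and "i \<in> {1..m}"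
  shows "if sg i then C i = op (C (i - 1)) (C (ov i)) else C (i - 1) = op (C i) (C (ov i))"
  using assms unfolding colorings_def by blast

lemma colorings_extensional: "C \<in> colorings op m ov sg \<Longrightarrow> C \<in> extensional {0..m}"
  unfolding colorings_def by (auto simp: PiE_iff)

lemma finite_colorings: "finite (colorings (op :: 'q::finite \<Rightarrow> 'q \<Rightarrow> 'q) m ov sg)"
proof (rule finite_subset)
  show "colorings op m ov sg \<subseteq> {0..m} \<rightarrow>\<^sub>E (UNIV :: 'q set)" unfolding colorings_def by auto
qed (auto intro: finite_PiE)

definition recolor :: "('a \<Rightarrow> 'b) \<Rightarrow> nat \<Rightarrow> (nat \<Rightarrow> 'a) \<Rightarrow> nat \<Rightarrow> 'b" where
  "recolor h m C = (\<lambda>i\<in>{0..m}. h (C i))"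

lemma recolor_colorings:
  assumes "tangle_diagram m ov" and "C \<in> colorings op m ov sg"
    and hom: "\<And>a b. h (op a b) = op' (h a) (h b)"
  shows "recolor h m C \<in> colorings op' m ov sg"
  unfolding colorings_def
proof (intro CollectI conjI ballI)
  fix i assume i: "i \<in> {1..m}"
  then have "ov i \<le> m" using assms(1) unfolding tangle_diagram_def by blast
  with i show "if sg i then recolor h m C i = op' (recolor h m C (i - 1)) (recolor h m C (ov i))
      else recolor h m C (i - 1) = op' (recolor h m C i) (recolor h m C (ov i))"
    using colorings_crossing[OF assms(2) i] by (auto simp: recolor_def hom split: if_splits)
qed (simp add: recolor_def)

lemma inj_on_recolor:
  assumes "inj h"
  shows "inj_on (recolor h m) (colorings op m ov sg)"
proof (rule inj_onI)
  fix C D assume C: "C \<in> colorings op m ov sg" and D: "D \<in> colorings op m ov sg"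
    and eq: "recolor h m C = recolor h m D"
  show "C = D"
  proof (rule extensionalityI[OF colorings_extensional[OF C] colorings_extensional[OF D]])
    fix i assume "i \<in> {0..m}"
    then have "h (C i) = h (D i)" using fun_cong[OF eq, of i] by (simp add: recolor_def)
    then show "C i = D i" using assms by (simp add: inj_eq)
  qed
qed

definition crossing_weight ::
    "('a \<Rightarrow> 'a \<Rightarrow> 'l::ab_group_add) \<Rightarrow> (nat \<Rightarrow> nat) \<Rightarrow> (nat \<Rightarrow> bool) \<Rightarrow> (nat \<Rightarrow> 'a) \<Rightarrow> nat \<Rightarrow> 'l"
  where "crossing_weight phi ov sg D i =
    (if sg i then phi (src_col sg D i) (D (ov i)) else - phi (src_col sg D i) (D (ov i)))"

lemma boltzmann_eq_sum_crossing_weight: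
  "boltzmann phi m ov sg D = (\<Sum>i\<in>{1..m}. crossing_weight phi ov sg D i)"
  unfolding boltzmann_def crossing_weight_def ..

lemma crossing_weight_cong:
  assumes "tangle_diagram m ov" "i \<in> {1..m}" "\<And>j. j \<le> m \<Longrightarrow> D j = D' j"
  shows "crossing_weight phi ov sg D i = crossing_weight phi ov sg D' i"
  using assms unfolding tangle_diagram_def crossing_weight_def src_col_def by auto

lemma fst_ext_coloring:
  assumes C: "C \<in> colorings (ext_op op phi) m ov sg" and "k \<le> m"
  shows "fst (C k) = fst (C 0) + (\<Sum>i\<in>{1..k}. crossing_weight phi ov sg (\<lambda>j. snd (C j)) i)"
  using assms(2)
proof (induction k)
  case (Suc k)
  then have "Suc k \<in> {1..m}" by simp
  from colorings_crossing[OF C this]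
  have "fst (C (Suc k)) = fst (C k) + crossing_weight phi ov sg (\<lambda>j. snd (C j)) (Suc k)"
    by (auto simp: ext_op_def crossing_weight_def src_col_def split: if_splits)
  with Suc show ?case by simp
qed simp

definition lift_coloring ::
    "('a \<Rightarrow> 'a \<Rightarrow> 'l::ab_group_add) \<Rightarrow> nat \<Rightarrow> (nat \<Rightarrow> nat) \<Rightarrow> (nat \<Rightarrow> bool) \<Rightarrow> (nat \<Rightarrow> 'a)
      \<Rightarrow> nat \<Rightarrow> 'l \<times> 'a"
  where "lift_coloring phi m ov sg D = (\<lambda>i\<in>{0..m}. (\<Sum>k\<in>{1..i}. crossing_weight phi ov sg D k, D i))"

lemma lift_coloring_0: "lift_coloring phi m ov sg D 0 = (0, D 0)"
  by (simp add: lift_coloring_def)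

lemma lift_coloring_top:
  "lift_coloring phi m ov sg D m = (boltzmann phi m ov sg D, D m)"
  by (simp add: lift_coloring_def boltzmann_eq_sum_crossing_weight)

lemma lift_coloring_colorings:
  assumes T: "tangle_diagram m ov" and D: "D \<in> colorings op m ov sg"
  shows "lift_coloring phi m ov sg D \<in> colorings (ext_op op phi) m ov sg"
  unfolding colorings_def
proof (intro CollectI conjI ballI)
  fix i assume i: "i \<in> {1..m}"
  then obtain j where j: "i = Suc j" by (cases i) auto
  have "ov i \<le> m" using T i unfolding tangle_diagram_def by blast
  with i show "if sg i
      then lift_coloring phi m ov sg D i = ext_op op phi (lift_coloring phi m ov sg D (i - 1))
             (lift_coloring phi m ov sg D (ov i))
      else lift_coloring phi m ov sg D (i - 1) = ext_op op phi (lift_coloring phi m ov sg D i)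
             (lift_coloring phi m ov sg D (ov i))"
    using colorings_crossing[OF D i] unfolding j lift_coloring_def
    by (auto simp: ext_op_def crossing_weight_def src_col_def)
qed (simp add: lift_coloring_def)

lemma recolor_snd_lift_coloring:
  assumes "D \<in> colorings op m ov sg"
  shows "recolor snd m (lift_coloring phi m ov sg D) = D"
  by (rule extensionalityI[OF _ colorings_extensional[OF assms]])
    (auto simp: recolor_def lift_coloring_def)

lemma lift_coloring_recolor_snd:
  assumes T: "tangle_diagram m ov" and C: "C \<in> colorings (ext_op op phi) m ov sg"
    and "fst (C 0) = 0"
  shows "lift_coloring phi m ov sg (recolor snd m C) = C"
proof (rule extensionalityI[OF _ colorings_extensional[OF C]])
  show "lift_coloring phi m ov sg (recolor snd m C) \<in> extensional {0..m}"
    by (simp add: lift_coloring_def)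
  fix i assume i: "i \<in> {0..m}"
  have "(\<Sum>k\<in>{1..i}. crossing_weight phi ov sg (recolor snd m C) k)
      = (\<Sum>k\<in>{1..i}. crossing_weight phi ov sg (\<lambda>j. snd (C j)) k)"
    using i by (intro sum.cong refl crossing_weight_cong[OF T]) (auto simp: recolor_def)
  also have "\<dots> = fst (C i)" using fst_ext_coloring[OF C] i assms(3) by simp
  finally show "lift_coloring phi m ov sg (recolor snd m C) i = C i"
    using i by (simp add: lift_coloring_def recolor_def prod_eq_iff)
qed

lemma bij_betw_lift_coloring:
  assumes "tangle_diagram m ov"
  shows "bij_betw (lift_coloring phi m ov sg) (colorings op m ov sg)
    {C \<in> colorings (ext_op op phi) m ov sg. fst (C 0) = 0}"
proof (rule bij_betw_byWitness[where f' = "recolor snd m"])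
  have "snd (ext_op op phi a b) = op (snd a) (snd b)" for a b by (simp add: ext_op_def)
  then show "recolor snd m ` {C \<in> colorings (ext_op op phi) m ov sg. fst (C 0) = 0}
      \<subseteq> colorings op m ov sg"
    using recolor_colorings[OF assms] by blast
  show "lift_coloring phi m ov sg ` colorings op m ov sg
      \<subseteq> {C \<in> colorings (ext_op op phi) m ov sg. fst (C 0) = 0}"
    using lift_coloring_colorings[OF assms] by (auto simp: lift_coloring_0)
qed (auto simp: recolor_snd_lift_coloring lift_coloring_recolor_snd[OF assms])

definition based_closure_count ::
    "('a \<Rightarrow> 'a \<Rightarrow> 'a) \<Rightarrow> ('a \<Rightarrow> 'a \<Rightarrow> 'l::ab_group_add) \<Rightarrow> nat \<Rightarrow> (nat \<Rightarrow> nat) \<Rightarrow> (nat \<Rightarrow> bool)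
      \<Rightarrow> 'a \<Rightarrow> 'l \<Rightarrow> nat"
  where "based_closure_count op phi m ov sg y lam =
    card {D \<in> closure_colorings op m ov sg. D 0 = y \<and> boltzmann phi m ov sg D = lam}"

lemma card_ext_colorings_ending_at:
  assumes "tangle_diagram m ov"
  shows "card {C \<in> col_e (ext_op op phi) m ov sg (0, x). C m = (lam, x)}
    = based_closure_count op phi m ov sg x lam"
proof -
  have "bij_betw (lift_coloring phi m ov sg)
      {D \<in> colorings op m ov sg. D 0 = x \<and> D m = x \<and> boltzmann phi m ov sg D = lam}
      {C \<in> {C \<in> colorings (ext_op op phi) m ov sg. fst (C 0) = 0}. snd (C 0) = x \<and> C m = (lam, x)}"
    by (rule bij_betw_Collect[OF bij_betw_lift_coloring[OF assms]])
      (auto simp: lift_coloring_0 lift_coloring_top)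
  moreover have "{C \<in> {C \<in> colorings (ext_op op phi) m ov sg. fst (C 0) = 0}. snd (C 0) = x \<and> C m = (lam, x)}
      = {C \<in> col_e (ext_op op phi) m ov sg (0, x). C m = (lam, x)}"
    by (auto simp: col_e_def prod_eq_iff)
  moreover have "{D \<in> colorings op m ov sg. D 0 = x \<and> D m = x \<and> boltzmann phi m ov sg D = lam}
      = {D \<in> closure_colorings op m ov sg. D 0 = x \<and> boltzmann phi m ov sg D = lam}"
    by (auto simp: closure_colorings_def)
  ultimately show ?thesis
    unfolding based_closure_count_def by (simp add: bij_betw_same_card)
qed

lemma boltzmann_recolor_right:
  assumes Q: "quandle op" and cc: "quandle_2cocycle op phi" and T: "tangle_diagram m ov"
    and D: "D \<in> colorings op m ov sg" and closed: "D 0 = D m"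
  shows "boltzmann phi m ov sg (recolor (\<lambda>y. op y c) m D) = boltzmann phi m ov sg D"
proof -
  have cocycle: "phi (op a c) (op b c) = phi a b + phi (op a b) c - phi a c" for a b
    using cc unfolding quandle_2cocycle_def by (metis add_diff_cancel_left')
  have local_change: "crossing_weight phi ov sg (recolor (\<lambda>y. op y c) m D) i
      = crossing_weight phi ov sg D i + (phi (D i) c - phi (D (i - 1)) c)" if i: "i \<in> {1..m}" for i
  proof -
    have "ov i \<le> m" using T i unfolding tangle_diagram_def by blast
    then show ?thesis
      using i colorings_crossing[OF D i]
      by (auto simp: crossing_weight_def src_col_def recolor_def cocycle)
  qed
  have "boltzmann phi m ov sg (recolor (\<lambda>y. op y c) m D)
      = boltzmann phi m ov sg D + (\<Sum>i\<in>{Suc 0..m}. phi (D i) c - phi (D (i - 1)) c)"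
    unfolding boltzmann_eq_sum_crossing_weight using local_change
    by (simp add: sum.distrib)
  also have "\<dots> = boltzmann phi m ov sg D"
    using sum_telescope''[of 0 m "\<lambda>i. phi (D i) c"] closed by simp
  finally show ?thesis .
qed

lemma based_closure_count_le_right:
  fixes op :: "'a::finite \<Rightarrow> 'a \<Rightarrow> 'a"
  assumes Q: "quandle op" and cc: "quandle_2cocycle op phi" and T: "tangle_diagram m ov"
  shows "based_closure_count op phi m ov sg y lam \<le> based_closure_count op phi m ov sg (op y c) lam"
  unfolding based_closure_count_def
proof (rule card_inj_on_le)
  show "inj_on (recolor (\<lambda>y. op y c) m)
      {D \<in> closure_colorings op m ov sg. D 0 = y \<and> boltzmann phi m ov sg D = lam}"
    using inj_on_recolor[OF bij_is_inj[OF bij_quandle_right[OF Q]]]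
    by (rule inj_on_subset) (auto simp: closure_colorings_def)
  show "recolor (\<lambda>y. op y c) m ` {D \<in> closure_colorings op m ov sg. D 0 = y \<and> boltzmann phi m ov sg D = lam}
      \<subseteq> {D \<in> closure_colorings op m ov sg. D 0 = op y c \<and> boltzmann phi m ov sg D = lam}"
  proof (intro image_subsetI)
    fix D assume "D \<in> {D \<in> closure_colorings op m ov sg. D 0 = y \<and> boltzmann phi m ov sg D = lam}"
    then have D: "D \<in> colorings op m ov sg" "D 0 = D m" "D 0 = y" "boltzmann phi m ov sg D = lam"
      by (auto simp: closure_colorings_def)
    have "recolor (\<lambda>y. op y c) m D \<in> colorings op m ov sg"
      by (rule recolor_colorings[OF T D(1)]) (rule quandle_right_distrib[OF Q])
    moreover have "recolor (\<lambda>y. op y c) m D 0 = op y c"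
      "recolor (\<lambda>y. op y c) m D m = op y c"
      using D(2,3) by (simp_all add: recolor_def)
    ultimately show "recolor (\<lambda>y. op y c) m D
        \<in> {D \<in> closure_colorings op m ov sg. D 0 = op y c \<and> boltzmann phi m ov sg D = lam}"
      unfolding closure_colorings_def mem_Collect_eq
      using boltzmann_recolor_right[OF Q cc T D(1,2)] D(4) by metis
  qed
  show "finite {D \<in> closure_colorings op m ov sg. D 0 = op y c \<and> boltzmann phi m ov sg D = lam}"
    by (rule finite_subset[OF _ finite_colorings]) (auto simp: closure_colorings_def)
qed

lemma le_comp_bij_imp_eq:
  fixes g :: "'a::finite \<Rightarrow> nat"
  assumes "bij R" and "\<And>y. g y \<le> g (R y)"
  shows "g (R y) = g y"
proof -
  have "sum g UNIV = sum (g \<circ> R) UNIV"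
    using sum.reindex[OF bij_is_inj[OF assms(1)], of g] bij_is_surj[OF assms(1)] by simp
  from sum_mono_inv[OF this] assms(2) show ?thesis by fastforce
qed

lemma based_closure_count_base_independent:
  fixes op :: "'a::finite \<Rightarrow> 'a \<Rightarrow> 'a"
  assumes Q: "quandle op" and cc: "quandle_2cocycle op phi" and T: "tangle_diagram m ov"
    and conn: "quandle_connected (ext_op op phi)"
  shows "based_closure_count op phi m ov sg y lam = based_closure_count op phi m ov sg x lam"
proof (rule quandle_connected_right_invariant_eq[OF quandle_connected_ext[OF conn]])
  show "based_closure_count op phi m ov sg (op y c) lam = based_closure_count op phi m ov sg y lam"
    for y c
    by (rule le_comp_bij_imp_eq[OF bij_quandle_right[OF Q]]) (rule based_closure_count_le_right[OF Q cc T])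
qed

lemma cocycle_invariant_eq_card_mult:
  fixes op :: "'a::finite \<Rightarrow> 'a \<Rightarrow> 'a"
  assumes Q: "quandle op" and cc: "quandle_2cocycle op phi" and T: "tangle_diagram m ov"
    and conn: "quandle_connected (ext_op op phi)"
  shows "cocycle_invariant op phi m ov sg lam
    = int (card (UNIV :: 'a set) * based_closure_count op phi m ov sg x lam)"
proof -
  let ?S = "{D \<in> closure_colorings op m ov sg. boltzmann phi m ov sg D = lam}"
  have "finite ?S"
    by (rule finite_subset[OF _ finite_colorings]) (auto simp: closure_colorings_def)
  then have "card ?S = (\<Sum>y\<in>UNIV. card {D \<in> ?S. D 0 = y})"
    using card_eq_sum sum.group[of ?S UNIV "\<lambda>D. D 0" "\<lambda>_. 1 :: nat"] by simp
  also have "\<dots> = (\<Sum>y\<in>UNIV. based_closure_count op phi m ov sg y lam)"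
    unfolding based_closure_count_def by (intro sum.cong refl arg_cong[where f = card]) auto
  also have "\<dots> = (\<Sum>y \<in> (UNIV :: 'a set). based_closure_count op phi m ov sg x lam)"
    by (rule sum.cong[OF refl]) (rule based_closure_count_base_independent[OF assms])
  finally show ?thesis
    unfolding cocycle_invariant_def formal_sum_def by simp
qed

theorem mainTheorem4:
  fixes opX :: "'x::finite \<Rightarrow> 'x \<Rightarrow> 'x"
    and phi :: "'x \<Rightarrow> 'x \<Rightarrow> 'l::{ab_group_add, finite}"
    and m :: nat and ov :: "nat \<Rightarrow> nat" and sg :: "nat \<Rightarrow> bool"
    and x :: 'x
  assumes "quandle opX"
    and "quandle_2cocycle opX phi"
    and "quandle_connected (ext_op opX phi)"
    and "tangle_diagram m ov"
  defines "Q \<equiv> ext_op opX phi"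
    and "e \<equiv> (0, x)"
    and "C0 \<equiv> {C \<in> col_e (ext_op opX phi) m ov sg (0, x). snd (C m) = x}"
    and "C1 \<equiv> col_e (ext_op opX phi) m ov sg (0, x)
                - {C \<in> col_e (ext_op opX phi) m ov sg (0, x). snd (C m) = x}"
  shows "(\<lambda>q. (of_int (Psi Q m ov sg e q) :: rat)) =
    (\<lambda>q. (1 / of_nat (card (UNIV :: 'x set))) *
            of_int (if snd q = x then cocycle_invariant opX phi m ov sg (fst q) else 0)
          + of_int (formal_sum C1 (\<lambda>C. C m) q))"
proof
  fix q :: "'l \<times> 'x"
  obtain lam y where q: "q = (lam, y)" by (cases q)
  have "Psi Q m ov sg e (lam, x) = based_closure_count opX phi m ov sg x lam"
    using card_ext_colorings_ending_at[OF assms(4)]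
    by (simp add: Psi_def formal_sum_def Q_def e_def)
  moreover have "formal_sum C1 (\<lambda>C. C m) (lam, x) = 0"
    by (auto simp: formal_sum_def C1_def card_eq_0_iff)
  moreover have "y \<noteq> x \<Longrightarrow> Psi Q m ov sg e (lam, y) = formal_sum C1 (\<lambda>C. C m) (lam, y)"
    unfolding Psi_def formal_sum_def Q_def e_def C1_def by (auto intro: arg_cong[where f = card])
  ultimately show "(of_int (Psi Q m ov sg e q) :: rat) = (1 / of_nat (card (UNIV :: 'x set))) *
            of_int (if snd q = x then cocycle_invariant opX phi m ov sg (fst q) else 0)
          + of_int (formal_sum C1 (\<lambda>C. C m) q)"
    using cocycle_invariant_eq_card_mult[OF assms(1,2,4,3), of sg lam x]
    by (auto simp: q)
qed

end
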